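(* Let $N\ge1$ and $0\le k<N$ be integers, let $q,z_0\in\mathbb{C}^\times$, and fix choices of $z_0^{1/N}$ and $q^{1/N^2}$, writing $q^{a/N^2}:=(q^{1/N^2})^a$ for $a\in\mathbb{Z}$. For $(n,m)\in\mathbb{Z}^2$ put $l_{n,m}=kn-Nm$. Let $\tau:\mathbb{Z}^2\to\mathbb{C}^\times$, $(n,m)\mapsto\tau_{(n,m)}$, satisfy $$\tau_{(n,m+1)}\tau_{(n,m-1)}=\tau_{(n,m)}^2+z_0^{1/N}q^{l_{n,m}/N^2}\tau_{(n+1,m)}\tau_{(n-1,m)}\quad\text{for all }(n,m)\in\mathbb{Z}^2,$$ together with $\tau_{(n+N,m+k)}=\tau_{(n,m)}$. Define $$x_{(n,m)}=z_0^{1/N}q^{(l_{n,m}+N)/N^2}\,\tau_{(n-1,m-1)}\tau_{(n+1,m-1)}\tau_{(n,m-1)}^{-2}.$$ Then for all $(n,m)$, $$\frac{x_{(n,m+1)}x_{(n,m-1)}}{x_{(n,m)}^2}=\frac{(1+x_{(n+1,m)})(1+x_{(n-1,m)})}{(1+x_{(n,m)})^2}$$ (whenever the right-hand side is defined) and $x_{(n,m)}=x_{(n+N,m+k)}$. *)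

theory Defs
  imports Complex_Main
begin

definition lnm :: "int \<Rightarrow> int \<Rightarrow> int \<Rightarrow> int \<Rightarrow> int" where
  "lnm N k n m = k * n - N * m"

text \<open>x_{(n,m)} = z0^{1/N} q^{(l_{n,m}+N)/N^2} tau(n-1,m-1) tau(n+1,m-1) tau(n,m-1)^{-2},
  where zr is the chosen z0^{1/N} and qr the chosen q^{1/N^2}, q^{a/N^2} = qr powi a.\<close>
definition xvar :: "int \<Rightarrow> int \<Rightarrow> complex \<Rightarrow> complex \<Rightarrow> (int \<Rightarrow> int \<Rightarrow> complex) \<Rightarrow> int \<Rightarrow> int \<Rightarrow> complex" where
  "xvar N k zr qr \<tau> n m =
     zr * qr powi (lnm N k n m + N) * \<tau> (n - 1) (m - 1) * \<tau> (n + 1) (m - 1) * inverse ((\<tau> n (m - 1))\<^sup>2)"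

end

theory Submission
  imports Defs
begin

text \<open>Write \<open>V\<close> (\<open>vratio\<close>) and \<open>H\<close> (\<open>hratio\<close>) for the second multiplicative differences of a function
  on \<open>\<int>\<^sup>2\<close> in the \<open>m\<close>- and the \<open>n\<close>-direction. The recursion says exactly that
  \<open>1 + x(n,m) = V \<tau> (n,m-1)\<close>, while \<open>x(n,m)\<close> is \<open>H \<tau> (n,m-1)\<close> times a factor
  \<open>z0^(1/N) q^(l(n,m-1)/N^2)\<close> that is geometric in \<open>m\<close> and hence invisible to \<open>V\<close>.
  So the claimed identity \<open>V x = H (1 + x)\<close> reduces to \<open>V (H \<tau>) = H (V \<tau>)\<close>, which holds
  for every nowhere vanishing \<open>\<tau>\<close>.\<close>

definition vratio :: "(int \<Rightarrow> int \<Rightarrow> 'a::field) \<Rightarrow> int \<Rightarrow> int \<Rightarrow> 'a" where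
  "vratio f n m = f n (m + 1) * f n (m - 1) / (f n m)\<^sup>2"

definition hratio :: "(int \<Rightarrow> int \<Rightarrow> 'a::field) \<Rightarrow> int \<Rightarrow> int \<Rightarrow> 'a" where
  "hratio f n m = f (n - 1) m * f (n + 1) m / (f n m)\<^sup>2"

lemma vratio_hratio_commute:
  fixes f :: "int \<Rightarrow> int \<Rightarrow> 'a::field"
  assumes "\<And>n m. f n m \<noteq> 0"
  shows "vratio (hratio f) n m = hratio (vratio f) n m"
  unfolding vratio_def hratio_def using assms by (simp add: field_simps)

lemma vratio_mult:
  "vratio (\<lambda>n m. f n m * g n m) n m = vratio f n m * vratio g n m"
  unfolding vratio_def by (simp add: power_mult_distrib)

lemma vratio_shift_down:
  "vratio (\<lambda>n m. f n (m - 1)) n m = vratio f n (m - 1)"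
  unfolding vratio_def by (simp add: algebra_simps)

lemma power_int_geometric_mean:
  fixes r :: "'a::field"
  assumes "r \<noteq> 0"
  shows "r powi (a + d) * r powi (a - d) = (r powi a)\<^sup>2"
  using assms by (simp add: power_int_add[symmetric] power2_eq_square)

lemma vratio_lnm_power:
  fixes c r :: "'a::field"
  assumes "c \<noteq> 0" "r \<noteq> 0"
  shows "vratio (\<lambda>n m. c * r powi lnm N k n m) n m = 1"
proof -
  have "lnm N k n (m + 1) = lnm N k n m + (- N)" "lnm N k n (m - 1) = lnm N k n m - (- N)"
    by (simp_all add: lnm_def algebra_simps)
  then have "r powi lnm N k n (m + 1) * r powi lnm N k n (m - 1) = (r powi lnm N k n m)\<^sup>2"
    using power_int_geometric_mean[OF assms(2)] by presburger
  then show ?thesis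
    unfolding vratio_def using assms by (simp add: field_simps power2_eq_square)
qed

lemma xvar_eq_hratio:
  "xvar N k zr qr \<tau> n m = zr * qr powi lnm N k n (m - 1) * hratio \<tau> n (m - 1)"
proof -
  have "lnm N k n m + N = lnm N k n (m - 1)" by (simp add: lnm_def algebra_simps)
  then show ?thesis
    unfolding xvar_def hratio_def by (simp add: divide_inverse mult.assoc)
qed

lemma one_plus_xvar_eq_vratio:
  assumes "\<And>n m. \<tau> n m \<noteq> 0"
    and "\<And>n m. \<tau> n (m + 1) * \<tau> n (m - 1) =
                 (\<tau> n m)\<^sup>2 + zr * qr powi (lnm N k n m) * \<tau> (n + 1) m * \<tau> (n - 1) m"
  shows "1 + xvar N k zr qr \<tau> n m = vratio \<tau> n (m - 1)"
proof -
  have "\<tau> n m * \<tau> n (m - 2) = (\<tau> n (m - 1))\<^sup>2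
          + zr * qr powi lnm N k n (m - 1) * \<tau> (n + 1) (m - 1) * \<tau> (n - 1) (m - 1)"
    using assms(2)[of n "m - 1"] by simp
  then show ?thesis
    unfolding xvar_eq_hratio vratio_def hratio_def using assms(1)
    by (simp add: field_simps)
qed

lemma vratio_xvar:
  assumes "zr \<noteq> 0" "qr \<noteq> 0"
  shows "vratio (xvar N k zr qr \<tau>) n m = vratio (hratio \<tau>) n (m - 1)"
proof -
  have "vratio (xvar N k zr qr \<tau>) n m
      = vratio (\<lambda>n m. zr * qr powi lnm N k n m) n (m - 1) * vratio (hratio \<tau>) n (m - 1)"
    using vratio_mult[of "\<lambda>n m. zr * qr powi lnm N k n m" "hratio \<tau>" n "m - 1"]
      vratio_shift_down[where f = "\<lambda>n m. zr * qr powi lnm N k n m * hratio \<tau> n m"]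
    by (simp add: xvar_eq_hratio[abs_def])
  then show ?thesis using vratio_lnm_power[OF assms] by simp
qed

lemma xvar_periodic:
  assumes "\<And>n m. \<tau> (n + N) (m + k) = \<tau> n m"
  shows "xvar N k zr qr \<tau> (n + N) (m + k) = xvar N k zr qr \<tau> n m"
proof -
  have "lnm N k (n + N) (m + k) = lnm N k n m" by (simp add: lnm_def algebra_simps)
  moreover have "\<tau> (n + N + d) (m + k - 1) = \<tau> (n + d) (m - 1)" for d
    using assms[of "n + d" "m - 1"] by (simp add: algebra_simps)
  from this[of "- 1"] this[of 1] this[of 0]
  have "\<tau> (n + N - 1) (m + k - 1) = \<tau> (n - 1) (m - 1)"
    "\<tau> (n + N + 1) (m + k - 1) = \<tau> (n + 1) (m - 1)"
    "\<tau> (n + N) (m + k - 1) = \<tau> n (m - 1)"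
    by simp_all
  ultimately show ?thesis unfolding xvar_def by simp
qed

theorem lemma2p8:
  fixes N k :: int and q z0 zr qr :: complex and \<tau> :: "int \<Rightarrow> int \<Rightarrow> complex"
  assumes hN: "N \<ge> 1" and hk: "0 \<le> k" "k < N"
    and hq: "q \<noteq> 0" and hz0: "z0 \<noteq> 0"
    and hzr: "zr ^ nat N = z0" and hqr: "qr ^ nat (N^2) = q"
    and h\<tau>0: "\<And>n m. \<tau> n m \<noteq> 0"
    and hrec: "\<And>n m. \<tau> n (m + 1) * \<tau> n (m - 1) =
                 (\<tau> n m)\<^sup>2 + zr * qr powi (lnm N k n m) * \<tau> (n + 1) m * \<tau> (n - 1) m"
    and hper: "\<And>n m. \<tau> (n + N) (m + k) = \<tau> n m"
  shows "(\<forall>n m. 1 + xvar N k zr qr \<tau> n m \<noteq> 0 \<longrightarrow>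
            xvar N k zr qr \<tau> n (m + 1) * xvar N k zr qr \<tau> n (m - 1) / (xvar N k zr qr \<tau> n m)\<^sup>2
            = (1 + xvar N k zr qr \<tau> (n + 1) m) * (1 + xvar N k zr qr \<tau> (n - 1) m)
              / (1 + xvar N k zr qr \<tau> n m)\<^sup>2)
       \<and> (\<forall>n m. xvar N k zr qr \<tau> n m = xvar N k zr qr \<tau> (n + N) (m + k))"
proof -
  have "zr \<noteq> 0" "qr \<noteq> 0" using hN hzr hz0 hqr hq by auto
  let ?x = "xvar N k zr qr \<tau>"
  have "vratio ?x n m = hratio (\<lambda>n m. 1 + ?x n m) n m" for n m
  proof -
    have "vratio ?x n m = hratio (vratio \<tau>) n (m - 1)"
      using vratio_xvar[OF \<open>zr \<noteq> 0\<close> \<open>qr \<noteq> 0\<close>] vratio_hratio_commute[OF h\<tau>0] by simp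
    also have "\<dots> = hratio (\<lambda>n m. 1 + ?x n m) n m"
      unfolding hratio_def one_plus_xvar_eq_vratio[OF h\<tau>0 hrec] ..
    finally show ?thesis .
  qed
  then show ?thesis
    unfolding vratio_def hratio_def using xvar_periodic[where \<tau> = \<tau>, OF hper] by (simp add: mult.commute)
qed

end
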